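(* Let $\Delta t>0$, let $L\in\mathbb{R}^{3\times 3}$ be symmetric positive definite, let $\mathcal{Z}\subset\mathfrak{so}(3)$ be a finite set, let $\Psi:\mathfrak{so}(3)\times\mathfrak{so}(3)\to SO(3)$ be a given map, and let $A_{k+1}\in\mathfrak{so}(3)$ and $Y_{k+1}\in SO(3)$ be given. Suppose $V_k:SO(3)\to\mathbb{R}$ has the min-plus affine form $$V_k(R)=\min_{\lambda\in\Lambda_k}\Big[c_\lambda-\tfrac12\,\mathrm{tr}(M_\lambda R)\Big],$$ where $\Lambda_k$ is a finite index set, $c_\lambda\in\mathbb{R}$ and $M_\lambda\in\mathbb{R}^{3\times3}$. Define $V_{k+1}:SO(3)\to\mathbb{R}$ by the one-step dynamic programming recursion $$V_{k+1}(R)=\min_{z\in\mathcal{Z}}\Big\{\tfrac12\,\mathrm{tr}(z^Tz)\,\Delta t+\tfrac14\,\phi_{L^{-1}}(R^{-1}Y_{k+1})\,\Delta t+V_k\big(R\,\Psi(A_{k+1},z)\big)\Big\},$$ where $\phi_M(Q):=\mathrm{tr}\big[(Q-I)^TM(Q-I)\big]$. Then $V_{k+1}$ has the same min-plus affine form: $$V_{k+1}(R)=\min_{(\lambda,z)\in\Lambda_k\times\mathcal{Z}}\Big[c_{(\lambda,z)}-\tfrac12\,\mathrm{tr}\big(M_{(\lambda,z)}R\big)\Big]\quad\text{for all }R\in SO(3),$$ with $$c_{(\lambda,z)}=c_\lambda+\tfrac12\,\mathrm{tr}(z^Tz)\,\Delta t+\tfrac12\,\mathrm{tr}(L^{-1})\,\Delta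 t,\qquad M_{(\lambda,z)}=(L^{-1})^TY_{k+1}^T\,\Delta t+\Psi(A_{k+1},z)\,M_\lambda .$$
   Context: $SO(3)$ is the group of $3\times3$ real orthogonal matrices with determinant $1$ and $\mathfrak{so}(3)$ the space of $3\times3$ real skew-symmetric matrices. This result concerns deterministic (minimum-energy) attitude filtering for the system $\dot R=R(A+z)$, $Y=R\epsilon$ with $\epsilon\in SO(3)$, where the value function is propagated backward in time by dynamic programming over a finite discretized disturbance set $\mathcal{Z}$, and $\Psi(A,z)$ denotes the (discretized) backward state-transition factor, so that the previous state is $R\,\Psi(A_{k+1},z)$. The min-plus notation $\bigoplus$/$\otimes$ stands for $\min$/$+$. *)

theory Defs
  imports "HOL-Analysis.Analysis"
begin

type_synonym mat3 = "real^3^3"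

definition SO3 :: "mat3 set" where
  "SO3 = {R. transpose R ** R = mat 1 \<and> det R = 1}"

definition so3 :: "mat3 set" where
  "so3 = {z. transpose z = - z}"

definition phi :: "mat3 \<Rightarrow> mat3 \<Rightarrow> real" where
  "phi M Q = trace (transpose (Q - mat 1) ** M ** (Q - mat 1))"

definition sym_pos_def :: "mat3 \<Rightarrow> bool" where
  "sym_pos_def L \<longleftrightarrow> transpose L = L \<and> (\<forall>x::real^3. x \<noteq> 0 \<longrightarrow> x \<bullet> (L *v x) > 0)"

end

theory Submission
  imports Defs
begin

(* For orthogonal Q and symmetric N we have tr (Q^T N Q) = tr N, so the running cost
   phi_{L^-1} (R^T Y) is affine in R: a constant minus a trace term linear in R.
   By cyclicity of the trace, V_k (R Psi) is again a minimum of affine functions of R, with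
   coefficients Psi M_lambda. Adding an affine function commutes with a finite minimum, and a
   minimum over z of minima over lambda is the minimum over the pairs (lambda, z). *)

lemma Min_Min_image_Times:
  fixes f :: "'a \<Rightarrow> 'b \<Rightarrow> 'c::linorder"
  assumes "finite A" "A \<noteq> {}" "finite B" "B \<noteq> {}"
  shows "Min ((\<lambda>b. Min ((\<lambda>a. f a b) ` A)) ` B) = Min (case_prod f ` (A \<times> B))"
proof (rule antisym)
  show "Min ((\<lambda>b. Min ((\<lambda>a. f a b) ` A)) ` B) \<le> Min (case_prod f ` (A \<times> B))"
  proof (rule Min.boundedI)
    fix x assume "x \<in> case_prod f ` (A \<times> B)"
    then obtain a b where ab: "a \<in> A" "b \<in> B" "x = f a b" by auto
    have "Min ((\<lambda>b. Min ((\<lambda>a. f a b) ` A)) ` B) \<le> Min ((\<lambda>a. f a b) ` A)"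
      using assms ab by (intro Min_le) auto
    also have "\<dots> \<le> f a b"
      using assms ab by (intro Min_le) auto
    finally show "Min ((\<lambda>b. Min ((\<lambda>a. f a b) ` A)) ` B) \<le> x" using ab by simp
  qed (use assms in auto)
next
  show "Min (case_prod f ` (A \<times> B)) \<le> Min ((\<lambda>b. Min ((\<lambda>a. f a b) ` A)) ` B)"
  proof (rule Min.boundedI)
    fix x assume "x \<in> (\<lambda>b. Min ((\<lambda>a. f a b) ` A)) ` B"
    then obtain b where b: "b \<in> B" "x = Min ((\<lambda>a. f a b) ` A)" by auto
    moreover have "Min ((\<lambda>a. f a b) ` A) \<in> (\<lambda>a. f a b) ` A"
      using assms by (intro Min_in) auto
    ultimately obtain a where "a \<in> A" "x = f a b" by auto
    with b assms show "Min (case_prod f ` (A \<times> B)) \<le> x"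
      by (intro Min_le) (auto intro!: image_eqI[of _ _ "(a, b)"])
  qed (use assms in auto)
qed

lemma matrix_diff_ldistrib: "(A :: 'a::ring_1^'n^'m) ** (B - C) = A ** B - A ** C"
  by (simp add: matrix_matrix_mult_def vec_eq_iff sum_subtractf right_diff_distrib)

lemma matrix_diff_rdistrib: "((A :: 'a::ring_1^'n^'m) - B) ** C = A ** C - B ** C"
  by (simp add: matrix_matrix_mult_def vec_eq_iff sum_subtractf left_diff_distrib)

lemma matrix_add_rdistrib: "((A :: 'a::semiring_1^'n^'m) + B) ** C = A ** C + B ** C"
  by (simp add: matrix_matrix_mult_def vec_eq_iff sum.distrib distrib_right)

lemma transpose_diff: "transpose ((A :: 'a::ab_group_add^'n^'m) - B) = transpose A - transpose B"
  by (simp add: transpose_def vec_eq_iff)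

lemma trace_transpose: "trace (transpose (A :: 'a::semiring_1^'n^'n)) = trace A"
  by (simp add: trace_def transpose_def)

lemma trace_scaleR: "trace (k *\<^sub>R (A :: real^'n^'n)) = k * trace A"
  by (simp add: trace_def sum_distrib_left)

lemma matrix_inv_eqI:
  fixes A X :: "'a::field^'n^'n"
  assumes "X ** A = mat 1"
  shows "matrix_inv A = X"
proof -
  have AX: "A ** X = mat 1"
    using assms matrix_left_right_inverse by blast
  have inv: "A ** matrix_inv A = mat 1 \<and> matrix_inv A ** A = mat 1"
    unfolding matrix_inv_def by (rule someI[of _ X]) (simp add: assms AX)
  have "matrix_inv A = (X ** A) ** matrix_inv A"
    using assms by simp
  also have "\<dots> = X"
    using inv by (simp flip: matrix_mul_assoc)
  finally show ?thesis .
qed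

lemma matrix_inv_orthogonal:
  assumes "orthogonal_matrix (Q :: real^'n^'n)"
  shows "matrix_inv Q = transpose Q"
  using assms by (simp add: matrix_inv_eqI orthogonal_matrix)

lemma matrix_inv_symmetric:
  fixes A :: "'a::field^'n^'n"
  assumes "invertible A" "transpose A = A"
  shows "transpose (matrix_inv A) = matrix_inv A"
proof -
  obtain B where BA: "B ** A = mat 1"
    using assms(1) invertible_left_inverse by blast
  then have "transpose A ** transpose B = mat 1"
    by (metis matrix_transpose_mul transpose_mat)
  then have "transpose B ** A = mat 1"
    using assms(2) matrix_left_right_inverse by metis
  then show ?thesis
    using BA matrix_inv_eqI by metis
qed

lemma sym_pos_def_invertible:
  assumes "sym_pos_def L"
  shows "invertible L"
proof -
  have "x = 0" if "L *v x = 0" for x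
    using assms that unfolding sym_pos_def_def by force
  then show ?thesis
    by (metis invertible_left_inverse matrix_left_invertible_ker)
qed

lemma SO3_iff_rotation_matrix: "R \<in> SO3 \<longleftrightarrow> rotation_matrix R"
  by (simp add: SO3_def rotation_matrix_def orthogonal_matrix)

lemma SO3_mult: "R \<in> SO3 \<Longrightarrow> P \<in> SO3 \<Longrightarrow> R ** P \<in> SO3"
  by (simp add: SO3_iff_rotation_matrix rotation_matrix_def orthogonal_matrix_mul det_mul)

lemma phi_orthogonal:
  assumes "transpose N = N" "orthogonal_matrix Q"
  shows "phi N Q = 2 * trace N - 2 * trace (N ** Q)"
proof -
  have "transpose (Q - mat 1) ** N ** (Q - mat 1)
      = transpose Q ** N ** Q - transpose Q ** N - N ** Q + N"
    by (simp add: transpose_diff matrix_diff_ldistrib matrix_diff_rdistrib matrix_mul_assoc)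
  moreover have "trace (transpose Q ** N ** Q) = trace N"
    using assms(2) by (metis matrix_mul_assoc matrix_mul_lid orthogonal_matrix_def trace_mul_sym)
  moreover have "trace (transpose Q ** N) = trace (N ** Q)"
    using assms(1) by (metis matrix_transpose_mul trace_transpose)
  ultimately show ?thesis
    unfolding phi_def by (simp add: trace_add trace_sub)
qed

lemma phi_inv_mult:
  assumes "transpose N = N" "R \<in> SO3" "Y \<in> SO3"
  shows "phi N (matrix_inv R ** Y) = 2 * trace N - 2 * trace (transpose N ** transpose Y ** R)"
proof -
  have R: "orthogonal_matrix R" and Y: "orthogonal_matrix Y"
    using assms(2,3) by (simp_all add: SO3_iff_rotation_matrix rotation_matrix_def)
  have "trace (N ** (transpose R ** Y)) = trace (transpose (transpose R ** Y) ** transpose N)"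
    by (metis matrix_transpose_mul trace_transpose)
  also have "\<dots> = trace (transpose N ** transpose Y ** R)"
    by (simp add: matrix_transpose_mul trace_mul_sym[of _ "transpose N"] matrix_mul_assoc)
  finally show ?thesis
    using assms(1) R Y
    by (simp add: matrix_inv_orthogonal phi_orthogonal orthogonal_matrix_mul)
qed

lemma phi_inv_mult_sym_pos_def:
  assumes "sym_pos_def L" "R \<in> SO3" "Y \<in> SO3"
  shows "1/4 * phi (matrix_inv L) (matrix_inv R ** Y) * dt
       = 1/2 * trace (matrix_inv L) * dt
         - 1/2 * trace ((dt *\<^sub>R (transpose (matrix_inv L) ** transpose Y)) ** R)"
proof -
  have sym: "transpose (matrix_inv L) = matrix_inv L"
    using assms(1) by (simp add: matrix_inv_symmetric sym_pos_def_invertible sym_pos_def_def)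
  show ?thesis
    unfolding phi_inv_mult[OF sym assms(2,3)] sym
    by (simp add: trace_scaleR matrix_mul_assoc algebra_simps flip: scalar_matrix_assoc)
qed

definition min_plus_affine :: "'l set \<Rightarrow> ('l \<Rightarrow> real) \<Rightarrow> ('l \<Rightarrow> real^'n^'n) \<Rightarrow> real^'n^'n \<Rightarrow> real"
  where "min_plus_affine \<Lambda> c M R = Min ((\<lambda>l. c l - 1/2 * trace (M l ** R)) ` \<Lambda>)"

lemma min_plus_affine_mult_right:
  "min_plus_affine \<Lambda> c M (R ** P) = min_plus_affine \<Lambda> c (\<lambda>l. P ** M l) R"
  unfolding min_plus_affine_def by (simp add: matrix_mul_assoc trace_mul_sym[of _ P])

lemma add_min_plus_affine:
  assumes "finite \<Lambda>" "\<Lambda> \<noteq> {}"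
  shows "k - 1/2 * trace (G ** R) + min_plus_affine \<Lambda> c M R
       = min_plus_affine \<Lambda> (\<lambda>l. k + c l) (\<lambda>l. G + M l) R"
proof -
  have "min_plus_affine \<Lambda> (\<lambda>l. k + c l) (\<lambda>l. G + M l) R
      = Min ((\<lambda>l. (c l - 1/2 * trace (M l ** R)) + (k - 1/2 * trace (G ** R))) ` \<Lambda>)"
    unfolding min_plus_affine_def
    by (simp add: matrix_add_rdistrib trace_add algebra_simps)
  also have "\<dots> = min_plus_affine \<Lambda> c M R + (k - 1/2 * trace (G ** R))"
    unfolding min_plus_affine_def using assms by (rule Min_add_commute)
  finally show ?thesis by simp
qed

lemma Min_min_plus_affine_Times:
  assumes "finite \<Lambda>" "\<Lambda> \<noteq> {}" "finite Z" "Z \<noteq> {}"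
  shows "Min ((\<lambda>z. min_plus_affine \<Lambda> (c z) (M z) R) ` Z)
       = min_plus_affine (\<Lambda> \<times> Z) (\<lambda>(l, z). c z l) (\<lambda>(l, z). M z l) R"
  unfolding min_plus_affine_def
  using Min_Min_image_Times[OF assms, of "\<lambda>l z. c z l - 1/2 * trace (M z l ** R)"]
  by (simp add: case_prod_beta')

lemma min_plus_affine_dp_step:
  assumes "finite \<Lambda>" "\<Lambda> \<noteq> {}" "finite Z" "Z \<noteq> {}"
    and V: "\<And>z. z \<in> Z \<Longrightarrow> V (R ** P z) = min_plus_affine \<Lambda> c M (R ** P z)"
  shows "Min ((\<lambda>z. a z + (k - 1/2 * trace (G ** R)) + V (R ** P z)) ` Z)
       = min_plus_affine (\<Lambda> \<times> Z) (\<lambda>(l, z). a z + k + c l) (\<lambda>(l, z). G + P z ** M l) R"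
proof -
  have "a z + (k - 1/2 * trace (G ** R)) + V (R ** P z)
      = min_plus_affine \<Lambda> (\<lambda>l. a z + k + c l) (\<lambda>l. G + P z ** M l) R" if "z \<in> Z" for z
    using add_min_plus_affine[OF assms(1,2),
        where k = "a z + k" and G = G and R = R and c = c and M = "\<lambda>l. P z ** M l"]
    by (simp add: V that min_plus_affine_mult_right add_diff_eq)
  then show ?thesis
    using Min_min_plus_affine_Times[OF assms(1-4)] by (simp cong: image_cong)
qed

theorem mainTheorem1:
  fixes dt :: real and L :: mat3 and Z :: "mat3 set"
    and Psi :: "mat3 \<Rightarrow> mat3 \<Rightarrow> mat3" and A Y :: mat3
    and Lam :: "'l set" and c :: "'l \<Rightarrow> real" and M :: "'l \<Rightarrow> mat3"
    and Vk Vk1 :: "mat3 \<Rightarrow> real"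
  assumes dt: "dt > 0"
    and L: "sym_pos_def L"
    and Zfin: "finite Z" and Zne: "Z \<noteq> {}" and Zsub: "Z \<subseteq> so3"
    and Psi: "\<And>a z. a \<in> so3 \<Longrightarrow> z \<in> so3 \<Longrightarrow> Psi a z \<in> SO3"
    and A: "A \<in> so3" and Y: "Y \<in> SO3"
    and Lfin: "finite Lam" and Lne: "Lam \<noteq> {}"
    and Vk: "\<And>R. R \<in> SO3 \<Longrightarrow>
               Vk R = Min ((\<lambda>l. c l - 1/2 * trace (M l ** R)) ` Lam)"
    and Vk1: "\<And>R. R \<in> SO3 \<Longrightarrow>
               Vk1 R = Min ((\<lambda>z. 1/2 * trace (transpose z ** z) * dt
                               + 1/4 * phi (matrix_inv L) (matrix_inv R ** Y) * dt
                               + Vk (R ** Psi A z)) ` Z)"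
  shows "\<forall>R \<in> SO3. Vk1 R =
           Min ((\<lambda>(l, z). (c l + 1/2 * trace (transpose z ** z) * dt
                                + 1/2 * trace (matrix_inv L) * dt)
                 - 1/2 * trace ((dt *\<^sub>R (transpose (matrix_inv L) ** transpose Y)
                                 + Psi A z ** M l) ** R)) ` (Lam \<times> Z))"
proof
  fix R assume R: "R \<in> SO3"
  have "Vk (R ** Psi A z) = min_plus_affine Lam c M (R ** Psi A z)" if "z \<in> Z" for z
    using that Zsub A by (simp add: Vk R Psi SO3_mult subsetD min_plus_affine_def)
  then have "Vk1 R = min_plus_affine (Lam \<times> Z)
      (\<lambda>(l, z). 1/2 * trace (transpose z ** z) * dt + 1/2 * trace (matrix_inv L) * dt + c l)
      (\<lambda>(l, z). dt *\<^sub>R (transpose (matrix_inv L) ** transpose Y) + Psi A z ** M l) R"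
    unfolding Vk1[OF R] phi_inv_mult_sym_pos_def[OF L R Y]
    by (rule min_plus_affine_dp_step[OF Lfin Lne Zfin Zne])
  then show "Vk1 R = Min ((\<lambda>(l, z). (c l + 1/2 * trace (transpose z ** z) * dt
                                + 1/2 * trace (matrix_inv L) * dt)
                 - 1/2 * trace ((dt *\<^sub>R (transpose (matrix_inv L) ** transpose Y)
                                 + Psi A z ** M l) ** R)) ` (Lam \<times> Z))"
    by (simp add: min_plus_affine_def case_prod_beta' algebra_simps)
qed

end
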